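(* For weights $\boldsymbol\sigma,\boldsymbol\sigma'$ and $a\in\mathbb C$ (generic, so that the entries below are defined), define the $N\times N$ matrix $$F_{lj}(\boldsymbol\sigma',a,\boldsymbol\sigma)=\prod_{k\ne l}\frac{\sin\pi\left((a+1)/N+\sigma'^{(j)}-\sigma^{(k)}\right)}{\sin\pi\left(\sigma^{(k)}-\sigma^{(l)}\right)}.$$ Then for $m=1,\dots,N$, $$F(\boldsymbol\sigma',a,\boldsymbol\sigma\pm\boldsymbol h_m)=D_m^{N-1}F(\boldsymbol\sigma',a\pm1,\boldsymbol\sigma),\qquad F(\boldsymbol\sigma'\pm\boldsymbol h_m,a,\boldsymbol\sigma)=F(\boldsymbol\sigma',a\mp1,\boldsymbol\sigma)D_m^{N-1},$$ and consequently, for $m,s=1,\dots,N$, $$F(\boldsymbol\sigma',a,\boldsymbol\sigma+\boldsymbol h_m-\boldsymbol h_s)=D_m^{N-1}D_s^{N-1}F(\boldsymbol\sigma',a,\boldsymbol\sigma),\qquad F(\boldsymbol\sigma'+\boldsymbol h_m-\boldsymbol h_s,a,\boldsymbol\sigma)=F(\boldsymbol\sigma',a,\boldsymbol\sigma)D_m^{N-1}D_s^{N-1}.$$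
   Context: Weights are vectors $\boldsymbol\sigma=(\sigma^{(1)},\dots,\sigma^{(N)})\in\mathbb C^N$ with zero component sum. $\boldsymbol h_m\in\mathbb C^N$ has components $h_m^{(k)}=\delta_{mk}-1/N$. $D_m$ is the diagonal matrix with $(D_m)_{kj}=(-1)^{\delta_{km}}\delta_{kj}$. *)

theory Defs
  imports "HOL-Analysis.Analysis"
begin

definition weight :: "complex ^ 'n::finite \<Rightarrow> bool" where
  "weight \<sigma> \<longleftrightarrow> (\<Sum>k\<in>UNIV. \<sigma> $ k) = 0"

definition hvec :: "'n::finite \<Rightarrow> complex ^ 'n" where
  "hvec m = (\<chi> k. (if k = m then 1 else 0) - 1 / of_nat CARD('n))"

definition Dmat :: "'n::finite \<Rightarrow> complex ^ 'n ^ 'n" where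
  "Dmat m = (\<chi> k j. if k = j then (if k = m then -1 else 1) else 0)"

primrec matpow :: "complex ^ 'n::finite ^ 'n \<Rightarrow> nat \<Rightarrow> complex ^ 'n ^ 'n" where
  "matpow A 0 = mat 1"
| "matpow A (Suc n) = A ** matpow A n"

definition Fmat :: "complex ^ 'n::finite \<Rightarrow> complex \<Rightarrow> complex ^ 'n \<Rightarrow> complex ^ 'n ^ 'n" where
  "Fmat \<sigma>' a \<sigma> = (\<chi> l j. \<Prod>k\<in>UNIV - {l}.
      sin (of_real pi * ((a + 1) / of_nat CARD('n) + \<sigma>' $ j - \<sigma> $ k))
      / sin (of_real pi * (\<sigma> $ k - \<sigma> $ l)))"

definition generic :: "complex ^ 'n::finite \<Rightarrow> bool" where
  "generic \<sigma> \<longleftrightarrow> (\<forall>k l. k \<noteq> l \<longrightarrow> sin (of_real pi * (\<sigma> $ k - \<sigma> $ l)) \<noteq> 0)"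

end

theory Submission
  imports Defs
begin

text \<open>Shifting \<sigma> by \<plusminus>h_m moves each component \<sigma>(k) by \<delta>(k,m) minus the common
  amount 1/N. The common amount is absorbed by the change a \<mapsto> a \<plusminus> 1, while the integer parts shift the
  sines by multiples of \<pi> and only contribute signs. In each entry of F these signs cancel
  except for the one attached to the fixed index (l for a shift of \<sigma>, j for a shift of \<sigma>'),
  which occurs once in each of the N - 1 factors and so produces the power of D_m.
  The identities hold for all \<sigma>, \<sigma>'.\<close>

lemma sin_add_unit_pi:
  fixes z :: "'a::{real_normed_field,banach}"
  assumes "\<epsilon> = 1 \<or> \<epsilon> = -1"
  shows "sin (z + \<epsilon> * of_real pi) = - sin z"
  using assms sin_plus_pi[of "z - of_real pi"] by (auto simp: sin_plus_pi)

lemma prod_sign_quotients: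
  fixes x y s :: "'a \<Rightarrow> 'b::field"
  assumes "\<And>k. k \<in> A \<Longrightarrow> s k \<noteq> 0" and "t * t = 1"
  shows "(\<Prod>k\<in>A. (s k * x k) / (s k * t * y k)) = t ^ card A * (\<Prod>k\<in>A. x k / y k)"
proof -
  have "inverse t = t" using assms(2) by (rule inverse_unique)
  have "(s k * x k) / (s k * t * y k) = t * (x k / y k)" if "k \<in> A" for k
  proof -
    have "(s k * x k) / (s k * t * y k) = x k / (t * y k)"
      using assms(1)[OF that] by (simp add: mult.assoc)
    also have "\<dots> = t * (x k / y k)"
      using \<open>inverse t = t\<close> by (simp add: divide_inverse ac_simps)
    finally show ?thesis .
  qed
  then have "(\<Prod>k\<in>A. (s k * x k) / (s k * t * y k)) = (\<Prod>k\<in>A. t * (x k / y k))"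
    by (rule prod.cong[OF refl])
  then show ?thesis by (simp only: prod.distrib prod_constant)
qed

lemma diagonal_matrix_mult:
  fixes A :: "'a::semiring_1 ^ 'm ^ 'n::finite"
  shows "(\<chi> i j. if i = j then d i else 0) ** A = (\<chi> i j. d i * A $ i $ j)"
  by (simp add: matrix_matrix_mult_def vec_eq_iff if_distrib[where f = "\<lambda>x. x * _"] cong: if_cong)

lemma matrix_mult_diagonal:
  fixes A :: "'a::semiring_1 ^ 'n::finite ^ 'm"
  shows "A ** (\<chi> i j. if i = j then d i else 0) = (\<chi> i j. A $ i $ j * d j)"
  by (simp add: matrix_matrix_mult_def vec_eq_iff if_distrib[where f = "\<lambda>x. _ * x"] cong: if_cong)

definition Dsign :: "'n \<Rightarrow> 'n \<Rightarrow> complex" where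
  "Dsign m k = (if k = m then -1 else 1)"

lemma Dsign_times_self [simp]: "Dsign m k * Dsign m k = 1"
  and Dsign_nonzero [simp]: "Dsign m k \<noteq> 0"
  by (simp_all add: Dsign_def)

lemma sin_add_unit_pi_delta:
  assumes "\<epsilon> = 1 \<or> \<epsilon> = -1"
  shows "sin (z + \<epsilon> * of_real pi * (if k = m then 1 else 0)) = Dsign m k * sin z"
  using sin_add_unit_pi[OF assms] by (simp add: Dsign_def)

lemma Dmat_eq_diagonal: "Dmat m = (\<chi> k j. if k = j then Dsign m k else 0)"
  by (simp add: Dmat_def Dsign_def vec_eq_iff)

lemma matpow_Dmat: "matpow (Dmat m) n = (\<chi> k j. if k = j then Dsign m k ^ n else 0)"
proof (induction n)
  case 0
  show ?case by (simp add: mat_def vec_eq_iff)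
next
  case (Suc n)
  show ?case
    by (simp add: Suc.IH) (simp add: Dmat_eq_diagonal diagonal_matrix_mult vec_eq_iff)
qed

lemma matpow_Dmat_mult: "matpow (Dmat m) n ** A = (\<chi> l j. Dsign m l ^ n * A $ l $ j)"
  by (simp add: matpow_Dmat diagonal_matrix_mult)

lemma mult_matpow_Dmat: "A ** matpow (Dmat m) n = (\<chi> l j. A $ l $ j * Dsign m j ^ n)"
  by (simp add: matpow_Dmat matrix_mult_diagonal)

lemma Fmat_shift_weight:
  fixes \<sigma> \<sigma>' :: "complex ^ 'n::finite"
  assumes \<epsilon>: "\<epsilon> = 1 \<or> \<epsilon> = -1"
  shows "Fmat \<sigma>' a (\<sigma> + \<epsilon> *s hvec m) = matpow (Dmat m) (CARD('n) - 1) ** Fmat \<sigma>' (a + \<epsilon>) \<sigma>"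
proof -
  let ?N = "of_nat CARD('n) :: complex"
  let ?\<tau> = "\<sigma> + \<epsilon> *s hvec m"
  have minus_\<epsilon>: "-\<epsilon> = 1 \<or> -\<epsilon> = -1" using \<epsilon> by auto
  have numerator: "sin (of_real pi * ((a + 1) / ?N + \<sigma>' $ j - ?\<tau> $ k))
      = Dsign m k * sin (of_real pi * ((a + \<epsilon> + 1) / ?N + \<sigma>' $ j - \<sigma> $ k))" for j k
  proof -
    have "of_real pi * ((a + 1) / ?N + \<sigma>' $ j - ?\<tau> $ k)
        = of_real pi * ((a + \<epsilon> + 1) / ?N + \<sigma>' $ j - \<sigma> $ k) + - \<epsilon> * of_real pi * (if k = m then 1 else 0)"
      by (simp add: hvec_def add_divide_distrib algebra_simps)
    then show ?thesis by (simp only: sin_add_unit_pi_delta[OF minus_\<epsilon>])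
  qed
  have denominator: "sin (of_real pi * (?\<tau> $ k - ?\<tau> $ l))
      = Dsign m k * Dsign m l * sin (of_real pi * (\<sigma> $ k - \<sigma> $ l))" for k l
  proof -
    have "of_real pi * (?\<tau> $ k - ?\<tau> $ l)
        = of_real pi * (\<sigma> $ k - \<sigma> $ l) + \<epsilon> * of_real pi * (if k = m then 1 else 0)
          + - \<epsilon> * of_real pi * (if l = m then 1 else 0)"
      by (simp add: hvec_def algebra_simps)
    then show ?thesis
      by (simp only: sin_add_unit_pi_delta[OF \<epsilon>] sin_add_unit_pi_delta[OF minus_\<epsilon>])
        (simp add: ac_simps)
  qed
  have "Fmat \<sigma>' a ?\<tau> $ l $ j = Dsign m l ^ (CARD('n) - 1) * Fmat \<sigma>' (a + \<epsilon>) \<sigma> $ l $ j" for l j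
    by (simp only: Fmat_def vec_lambda_beta numerator denominator)
      (subst prod_sign_quotients; simp add: card_Diff_singleton)
  then show ?thesis by (simp add: matpow_Dmat_mult vec_eq_iff)
qed

lemma Fmat_shift_weight':
  fixes \<sigma> \<sigma>' :: "complex ^ 'n::finite"
  assumes \<epsilon>: "\<epsilon> = 1 \<or> \<epsilon> = -1"
  shows "Fmat (\<sigma>' + \<epsilon> *s hvec m) a \<sigma> = Fmat \<sigma>' (a - \<epsilon>) \<sigma> ** matpow (Dmat m) (CARD('n) - 1)"
proof -
  let ?N = "of_nat CARD('n) :: complex"
  have numerator: "sin (of_real pi * ((a + 1) / ?N + (\<sigma>' + \<epsilon> *s hvec m) $ j - \<sigma> $ k))
      = Dsign m j * sin (of_real pi * ((a - \<epsilon> + 1) / ?N + \<sigma>' $ j - \<sigma> $ k))" for j k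
  proof -
    have "of_real pi * ((a + 1) / ?N + (\<sigma>' + \<epsilon> *s hvec m) $ j - \<sigma> $ k)
        = of_real pi * ((a - \<epsilon> + 1) / ?N + \<sigma>' $ j - \<sigma> $ k) + \<epsilon> * of_real pi * (if j = m then 1 else 0)"
      by (simp add: hvec_def add_divide_distrib diff_divide_distrib algebra_simps)
    then show ?thesis by (simp only: sin_add_unit_pi_delta[OF \<epsilon>])
  qed
  have "Fmat (\<sigma>' + \<epsilon> *s hvec m) a \<sigma> $ l $ j = Dsign m j ^ (CARD('n) - 1) * Fmat \<sigma>' (a - \<epsilon>) \<sigma> $ l $ j" for l j
    by (simp only: Fmat_def vec_lambda_beta numerator)
      (simp add: prod.distrib card_Diff_singleton flip: times_divide_eq_right)
  then show ?thesis by (simp add: mult_matpow_Dmat vec_eq_iff mult.commute)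
qed

theorem proposition4p2:
  fixes \<sigma> \<sigma>' :: "complex ^ 'n::finite" and a :: complex and m s :: 'n
  assumes "weight \<sigma>" and "weight \<sigma>'" and "generic \<sigma>"
  shows "Fmat \<sigma>' a (\<sigma> + hvec m) = matpow (Dmat m) (CARD('n) - 1) ** Fmat \<sigma>' (a + 1) \<sigma>
    \<and> Fmat \<sigma>' a (\<sigma> - hvec m) = matpow (Dmat m) (CARD('n) - 1) ** Fmat \<sigma>' (a - 1) \<sigma>
    \<and> Fmat (\<sigma>' + hvec m) a \<sigma> = Fmat \<sigma>' (a - 1) \<sigma> ** matpow (Dmat m) (CARD('n) - 1)
    \<and> Fmat (\<sigma>' - hvec m) a \<sigma> = Fmat \<sigma>' (a + 1) \<sigma> ** matpow (Dmat m) (CARD('n) - 1)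
    \<and> Fmat \<sigma>' a (\<sigma> + hvec m - hvec s) =
        matpow (Dmat m) (CARD('n) - 1) ** matpow (Dmat s) (CARD('n) - 1) ** Fmat \<sigma>' a \<sigma>
    \<and> Fmat (\<sigma>' + hvec m - hvec s) a \<sigma> =
        Fmat \<sigma>' a \<sigma> ** matpow (Dmat m) (CARD('n) - 1) ** matpow (Dmat s) (CARD('n) - 1)"
proof -
  have add_h: "Fmat \<sigma>' b (\<tau> + hvec k) = matpow (Dmat k) (CARD('n) - 1) ** Fmat \<sigma>' (b + 1) \<tau>"
    and sub_h: "Fmat \<sigma>' b (\<tau> - hvec k) = matpow (Dmat k) (CARD('n) - 1) ** Fmat \<sigma>' (b - 1) \<tau>"
    and add_h': "Fmat (\<tau>' + hvec k) b \<sigma> = Fmat \<tau>' (b - 1) \<sigma> ** matpow (Dmat k) (CARD('n) - 1)"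
    and sub_h': "Fmat (\<tau>' - hvec k) b \<sigma> = Fmat \<tau>' (b + 1) \<sigma> ** matpow (Dmat k) (CARD('n) - 1)"
    for \<tau> \<tau>' :: "complex ^ 'n" and b k
    using Fmat_shift_weight[of 1 \<sigma>' b \<tau> k] Fmat_shift_weight[of "-1" \<sigma>' b \<tau> k]
      Fmat_shift_weight'[of 1 \<tau>' k b \<sigma>] Fmat_shift_weight'[of "-1" \<tau>' k b \<sigma>]
    by (simp_all flip: vector_sneg_minus1)
  have "\<sigma> + hvec m - hvec s = (\<sigma> - hvec s) + hvec m" and "\<sigma>' + hvec m - hvec s = (\<sigma>' + hvec m) - hvec s"
    by (simp_all add: algebra_simps)
  then show ?thesis
    by (simp only: add_h sub_h add_h' sub_h' matrix_mul_assoc) simp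
qed

end
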